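(* Let $X$ and $Y$ be independent random variables, each symmetric about $0$ (i.e. $X\overset{d}{=}-X$, $Y\overset{d}{=}-Y$). If $|X|\le_{\mathrm{st}}|Y|$, then $$|X|\le_{\mathrm{st}}|\min(X,Y)|\overset{d}{=}|\max(X,Y)|\le_{\mathrm{st}}|Y|.$$ These stochastic inequalities are strict if and only if $|X|<_{\mathrm{st}}|Y|$.
   Context: For random variables $U,V$, $U\le_{\mathrm{st}}V$ means $F_U(x)\ge F_V(x)$ for all real $x$ ($F$ the cdf), and $U<_{\mathrm{st}}V$ means additionally $F_U(x)>F_V(x)$ for at least one $x$. *)

theory Defs
  imports "HOL-Probability.Probability"
begin

definition st_le :: "'a measure \<Rightarrow> ('a \<Rightarrow> real) \<Rightarrow> ('a \<Rightarrow> real) \<Rightarrow> bool" where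
  "st_le M U V \<longleftrightarrow> (\<forall>x::real. cdf (distr M borel V) x \<le> cdf (distr M borel U) x)"

definition st_less :: "'a measure \<Rightarrow> ('a \<Rightarrow> real) \<Rightarrow> ('a \<Rightarrow> real) \<Rightarrow> bool" where
  "st_less M U V \<longleftrightarrow> st_le M U V \<and> (\<exists>x::real. cdf (distr M borel V) x < cdf (distr M borel U) x)"

end

theory Submission
  imports Defs
begin

text \<open>
  For \<open>t \<ge> 0\<close> put \<open>a = P(X > t) = P(X < -t)\<close> and \<open>b = P(Y > t) = P(Y < -t)\<close>.
  Then \<open>P(|X| \<le> t) = 1 - 2a\<close>, \<open>P(|Y| \<le> t) = 1 - 2b\<close>, and by independence
  \<open>P(|min(X,Y)| \<le> t) = P(X \<ge> -t) P(Y \<ge> -t) - P(X > t) P(Y > t) = (1-a)(1-b) - ab = 1 - a - b\<close>,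
  and the same value for \<open>max\<close>. So the cdfs of \<open>|min(X,Y)|\<close> and \<open>|max(X,Y)|\<close> coincide and are
  the average of those of \<open>|X|\<close> and \<open>|Y|\<close>; a midpoint of two ordered cdfs lies between them,
  strictly exactly when they differ somewhere.
\<close>

context prob_space
begin

lemma cdf_distr_eq_prob:
  assumes "random_variable borel V"
  shows "cdf (distr M borel V) x = \<P>(\<omega> in M. V \<omega> \<le> x)"
  using assms unfolding cdf_def
  by (subst measure_distr) (auto intro!: arg_cong[where f=prob])

lemma prob_conj_not_eq_diff:
  assumes [measurable]: "Measurable.pred M P" "Measurable.pred M Q"
    and "\<And>\<omega>. Q \<omega> \<Longrightarrow> P \<omega>"
  shows "\<P>(\<omega> in M. P \<omega> \<and> \<not> Q \<omega>) = \<P>(\<omega> in M. P \<omega>) - \<P>(\<omega> in M. Q \<omega>)"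
proof -
  have "{\<omega>\<in>space M. P \<omega> \<and> \<not> Q \<omega>} = {\<omega>\<in>space M. P \<omega>} - {\<omega>\<in>space M. Q \<omega>}" by auto
  then show ?thesis
    using assms(3) by (simp add: finite_measure_Diff subset_eq)
qed

lemma prob_le_eq_one_minus_greater:
  fixes t :: real
  assumes [measurable]: "random_variable borel X"
  shows "\<P>(\<omega> in M. X \<omega> \<le> t) = 1 - \<P>(\<omega> in M. X \<omega> > t)"
  using prob_neg[of "\<lambda>\<omega>. X \<omega> > t"] by (simp add: not_less)

lemma prob_greater_eq_prob_less_neg:
  fixes t :: real
  assumes "random_variable borel X" and sym: "distr M borel X = distr M borel (\<lambda>\<omega>. - X \<omega>)"
  shows "\<P>(\<omega> in M. X \<omega> > t) = \<P>(\<omega> in M. X \<omega> < -t)"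
proof -
  have "measure (distr M borel X) {t<..} = measure (distr M borel (\<lambda>\<omega>. - X \<omega>)) {t<..}"
    using sym by simp
  then show ?thesis
    using assms(1) by (subst (asm) (1 2) measure_distr)
      (auto intro!: arg_cong[where f=prob] simp: vimage_def Int_def conj_commute)
qed

lemma cdf_abs_neg:
  assumes "random_variable borel V" "t < 0"
  shows "cdf (distr M borel (\<lambda>\<omega>. \<bar>V \<omega>\<bar>)) t = 0"
proof -
  have "{\<omega>\<in>space M. \<bar>V \<omega>\<bar> \<le> t} = {}"
    using \<open>t < 0\<close> by auto
  moreover have "cdf (distr M borel (\<lambda>\<omega>. \<bar>V \<omega>\<bar>)) t = \<P>(\<omega> in M. \<bar>V \<omega>\<bar> \<le> t)"
    using assms(1) by (intro cdf_distr_eq_prob) measurable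
  ultimately show ?thesis
    by (simp only:) simp
qed

lemma cdf_abs_symmetric:
  assumes [measurable]: "random_variable borel X"
    and sym: "distr M borel X = distr M borel (\<lambda>\<omega>. - X \<omega>)" and "0 \<le> t"
  shows "cdf (distr M borel (\<lambda>\<omega>. \<bar>X \<omega>\<bar>)) t = 1 - 2 * \<P>(\<omega> in M. X \<omega> > t)"
proof -
  have "cdf (distr M borel (\<lambda>\<omega>. \<bar>X \<omega>\<bar>)) t = \<P>(\<omega> in M. X \<omega> \<le> t \<and> \<not> X \<omega> < -t)"
    by (subst cdf_distr_eq_prob) (auto intro!: arg_cong[where f=prob])
  also have "\<dots> = \<P>(\<omega> in M. X \<omega> \<le> t) - \<P>(\<omega> in M. X \<omega> < -t)"
    using \<open>0 \<le> t\<close> by (intro prob_conj_not_eq_diff) auto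
  also have "\<dots> = 1 - 2 * \<P>(\<omega> in M. X \<omega> > t)"
    by (simp add: prob_le_eq_one_minus_greater prob_greater_eq_prob_less_neg[OF assms(1) sym])
  finally show ?thesis .
qed

lemma prob_ge_neg_symmetric:
  fixes t :: real
  assumes [measurable]: "random_variable borel X"
    and "distr M borel X = distr M borel (\<lambda>\<omega>. - X \<omega>)"
  shows "\<P>(\<omega> in M. X \<omega> \<ge> -t) = 1 - \<P>(\<omega> in M. X \<omega> > t)"
  using prob_neg[of "\<lambda>\<omega>. X \<omega> < -t"] prob_greater_eq_prob_less_neg[OF assms, of t]
  by (simp add: not_less)

lemma cdf_abs_min_indep_symmetric:
  assumes [measurable]: "random_variable borel X" "random_variable borel Y"
    and indep: "indep_var borel X borel Y"
    and symX: "distr M borel X = distr M borel (\<lambda>\<omega>. - X \<omega>)"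
    and symY: "distr M borel Y = distr M borel (\<lambda>\<omega>. - Y \<omega>)"
    and "0 \<le> t"
  shows "cdf (distr M borel (\<lambda>\<omega>. \<bar>min (X \<omega>) (Y \<omega>)\<bar>)) t
    = 1 - \<P>(\<omega> in M. X \<omega> > t) - \<P>(\<omega> in M. Y \<omega> > t)"
proof -
  have "cdf (distr M borel (\<lambda>\<omega>. \<bar>min (X \<omega>) (Y \<omega>)\<bar>)) t
      = \<P>(\<omega> in M. (X \<omega> \<in> {-t..} \<and> Y \<omega> \<in> {-t..}) \<and> \<not> (X \<omega> \<in> {t<..} \<and> Y \<omega> \<in> {t<..}))"
    by (subst cdf_distr_eq_prob) (auto intro!: arg_cong[where f=prob])
  also have "\<dots> = \<P>(\<omega> in M. X \<omega> \<in> {-t..} \<and> Y \<omega> \<in> {-t..})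
      - \<P>(\<omega> in M. X \<omega> \<in> {t<..} \<and> Y \<omega> \<in> {t<..})"
    using \<open>0 \<le> t\<close> by (intro prob_conj_not_eq_diff) auto
  also have "\<dots> = \<P>(\<omega> in M. X \<omega> \<ge> -t) * \<P>(\<omega> in M. Y \<omega> \<ge> -t)
      - \<P>(\<omega> in M. X \<omega> > t) * \<P>(\<omega> in M. Y \<omega> > t)"
    using prob_indep_random_variable[OF indep, of "{-t..}" "{-t..}"]
      prob_indep_random_variable[OF indep, of "{t<..}" "{t<..}"] by simp
  also have "\<dots> = 1 - \<P>(\<omega> in M. X \<omega> > t) - \<P>(\<omega> in M. Y \<omega> > t)"
    by (simp add: prob_ge_neg_symmetric symX symY algebra_simps)
  finally show ?thesis .
qed

lemma cdf_abs_max_indep_symmetric: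
  assumes [measurable]: "random_variable borel X" "random_variable borel Y"
    and indep: "indep_var borel X borel Y"
    and symX: "distr M borel X = distr M borel (\<lambda>\<omega>. - X \<omega>)"
    and symY: "distr M borel Y = distr M borel (\<lambda>\<omega>. - Y \<omega>)"
    and "0 \<le> t"
  shows "cdf (distr M borel (\<lambda>\<omega>. \<bar>max (X \<omega>) (Y \<omega>)\<bar>)) t
    = 1 - \<P>(\<omega> in M. X \<omega> > t) - \<P>(\<omega> in M. Y \<omega> > t)"
proof -
  have "cdf (distr M borel (\<lambda>\<omega>. \<bar>max (X \<omega>) (Y \<omega>)\<bar>)) t
      = \<P>(\<omega> in M. (X \<omega> \<in> {..t} \<and> Y \<omega> \<in> {..t}) \<and> \<not> (X \<omega> \<in> {..< -t} \<and> Y \<omega> \<in> {..< -t}))"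
    by (subst cdf_distr_eq_prob) (auto intro!: arg_cong[where f=prob])
  also have "\<dots> = \<P>(\<omega> in M. X \<omega> \<in> {..t} \<and> Y \<omega> \<in> {..t})
      - \<P>(\<omega> in M. X \<omega> \<in> {..< -t} \<and> Y \<omega> \<in> {..< -t})"
    using \<open>0 \<le> t\<close> by (intro prob_conj_not_eq_diff) auto
  also have "\<dots> = \<P>(\<omega> in M. X \<omega> \<le> t) * \<P>(\<omega> in M. Y \<omega> \<le> t)
      - \<P>(\<omega> in M. X \<omega> < -t) * \<P>(\<omega> in M. Y \<omega> < -t)"
    using prob_indep_random_variable[OF indep, of "{..t}" "{..t}"]
      prob_indep_random_variable[OF indep, of "{..< -t}" "{..< -t}"] by simp
  also have "\<dots> = 1 - \<P>(\<omega> in M. X \<omega> > t) - \<P>(\<omega> in M. Y \<omega> > t)"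
    by (simp add: prob_le_eq_one_minus_greater prob_greater_eq_prob_less_neg[symmetric] symX symY
        algebra_simps)
  finally show ?thesis .
qed

lemma cdf_abs_min_midpoint:
  assumes [measurable]: "random_variable borel X" "random_variable borel Y"
    and "indep_var borel X borel Y"
    and symX: "distr M borel X = distr M borel (\<lambda>\<omega>. - X \<omega>)"
    and symY: "distr M borel Y = distr M borel (\<lambda>\<omega>. - Y \<omega>)"
  shows "cdf (distr M borel (\<lambda>\<omega>. \<bar>min (X \<omega>) (Y \<omega>)\<bar>)) t
    = (cdf (distr M borel (\<lambda>\<omega>. \<bar>X \<omega>\<bar>)) t + cdf (distr M borel (\<lambda>\<omega>. \<bar>Y \<omega>\<bar>)) t) / 2"
proof (cases "t < 0")
  case True
  have "random_variable borel (\<lambda>\<omega>. min (X \<omega>) (Y \<omega>))" by measurable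
  then show ?thesis
    using True by (simp add: cdf_abs_neg)
next
  case False
  then show ?thesis
    by (simp add: cdf_abs_min_indep_symmetric[OF assms] cdf_abs_symmetric symX symY)
qed

lemma cdf_abs_max_midpoint:
  assumes [measurable]: "random_variable borel X" "random_variable borel Y"
    and "indep_var borel X borel Y"
    and symX: "distr M borel X = distr M borel (\<lambda>\<omega>. - X \<omega>)"
    and symY: "distr M borel Y = distr M borel (\<lambda>\<omega>. - Y \<omega>)"
  shows "cdf (distr M borel (\<lambda>\<omega>. \<bar>max (X \<omega>) (Y \<omega>)\<bar>)) t
    = (cdf (distr M borel (\<lambda>\<omega>. \<bar>X \<omega>\<bar>)) t + cdf (distr M borel (\<lambda>\<omega>. \<bar>Y \<omega>\<bar>)) t) / 2"
proof (cases "t < 0")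
  case True
  have "random_variable borel (\<lambda>\<omega>. max (X \<omega>) (Y \<omega>))" by measurable
  then show ?thesis
    using True by (simp add: cdf_abs_neg)
next
  case False
  then show ?thesis
    by (simp add: cdf_abs_max_indep_symmetric[OF assms] cdf_abs_symmetric symX symY)
qed

end

lemma st_le_midpoint:
  assumes mid: "\<And>x. cdf (distr M borel W) x = (cdf (distr M borel U) x + cdf (distr M borel V) x) / 2"
    and "st_le M U V"
  shows "st_le M U W" "st_le M W V"
  using assms unfolding st_le_def by (simp_all add: mid)

lemma st_less_midpoint_iff:
  assumes mid: "\<And>x. cdf (distr M borel W) x = (cdf (distr M borel U) x + cdf (distr M borel V) x) / 2"
    and "st_le M U V"
  shows "st_less M U W \<longleftrightarrow> st_less M U V" "st_less M W V \<longleftrightarrow> st_less M U V"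
  using assms unfolding st_less_def st_le_def by (auto simp: mid)

theorem theorem5p1:
  fixes M :: "'a measure" and X Y :: "'a \<Rightarrow> real"
  assumes "prob_space M"
    and "X \<in> borel_measurable M" and "Y \<in> borel_measurable M"
    and "prob_space.indep_var M borel X borel Y"
    and "distr M borel X = distr M borel (\<lambda>\<omega>. - X \<omega>)"
    and "distr M borel Y = distr M borel (\<lambda>\<omega>. - Y \<omega>)"
    and "st_le M (\<lambda>\<omega>. \<bar>X \<omega>\<bar>) (\<lambda>\<omega>. \<bar>Y \<omega>\<bar>)"
  shows "st_le M (\<lambda>\<omega>. \<bar>X \<omega>\<bar>) (\<lambda>\<omega>. \<bar>min (X \<omega>) (Y \<omega>)\<bar>)
       \<and> distr M borel (\<lambda>\<omega>. \<bar>min (X \<omega>) (Y \<omega>)\<bar>) = distr M borel (\<lambda>\<omega>. \<bar>max (X \<omega>) (Y \<omega>)\<bar>)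
       \<and> st_le M (\<lambda>\<omega>. \<bar>max (X \<omega>) (Y \<omega>)\<bar>) (\<lambda>\<omega>. \<bar>Y \<omega>\<bar>)
       \<and> (st_less M (\<lambda>\<omega>. \<bar>X \<omega>\<bar>) (\<lambda>\<omega>. \<bar>min (X \<omega>) (Y \<omega>)\<bar>)
            \<longleftrightarrow> st_less M (\<lambda>\<omega>. \<bar>X \<omega>\<bar>) (\<lambda>\<omega>. \<bar>Y \<omega>\<bar>))
       \<and> (st_less M (\<lambda>\<omega>. \<bar>max (X \<omega>) (Y \<omega>)\<bar>) (\<lambda>\<omega>. \<bar>Y \<omega>\<bar>)
            \<longleftrightarrow> st_less M (\<lambda>\<omega>. \<bar>X \<omega>\<bar>) (\<lambda>\<omega>. \<bar>Y \<omega>\<bar>))"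
proof -
  interpret prob_space M by fact
  note [measurable] = assms(2,3)
  have min_mid: "\<And>t. cdf (distr M borel (\<lambda>\<omega>. \<bar>min (X \<omega>) (Y \<omega>)\<bar>)) t
      = (cdf (distr M borel (\<lambda>\<omega>. \<bar>X \<omega>\<bar>)) t + cdf (distr M borel (\<lambda>\<omega>. \<bar>Y \<omega>\<bar>)) t) / 2"
    by (rule cdf_abs_min_midpoint[OF assms(2-6)])
  have max_mid: "\<And>t. cdf (distr M borel (\<lambda>\<omega>. \<bar>max (X \<omega>) (Y \<omega>)\<bar>)) t
      = (cdf (distr M borel (\<lambda>\<omega>. \<bar>X \<omega>\<bar>)) t + cdf (distr M borel (\<lambda>\<omega>. \<bar>Y \<omega>\<bar>)) t) / 2"
    by (rule cdf_abs_max_midpoint[OF assms(2-6)])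
  have "distr M borel (\<lambda>\<omega>. \<bar>min (X \<omega>) (Y \<omega>)\<bar>) = distr M borel (\<lambda>\<omega>. \<bar>max (X \<omega>) (Y \<omega>)\<bar>)"
    by (rule cdf_unique) (auto intro!: real_distribution_distr simp: min_mid max_mid)
  then show ?thesis
    using st_le_midpoint[OF min_mid assms(7)] st_le_midpoint[OF max_mid assms(7)]
      st_less_midpoint_iff[OF min_mid assms(7)] st_less_midpoint_iff[OF max_mid assms(7)]
    by blast
qed

end
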